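(* Let $n,m\in\mathbb{N}$ and $g\in C^2[0,1]$. With $I_{n,m}(g)=\frac{1}{m(n+1)}\sum_{k=1}^m\sum_{i=0}^n g\left(\frac{kn-n+i}{mn}\right)$, $$ \left|\int_0^1g(x)\,dx-I_{n,m}(g)\right|\le\frac{1}{12m^2n}\|g''\|_\infty. $$
   Context: $I_{n,m}(g)$ equals $\int_0^1\overline{B}_{n,m}(g;x)\,dx$, where $\overline{B}_{n,m}(g;x)=B_n^{[\frac{k-1}{m},\frac km]}(g;x)$ on $\left[\frac{k-1}{m},\frac km\right]$ and $B_n^{[a,b]}(g;x)=\frac{1}{(b-a)^n}\sum_{i=0}^n\binom ni(x-a)^i(b-x)^{n-i}g(a+i\frac{b-a}{n})$. $\|\cdot\|_\infty$ is the sup norm on $[0,1]$. *)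

theory Defs
  imports "HOL-Analysis.Analysis"
begin

definition C2_on_unit :: "(real \<Rightarrow> real) \<Rightarrow> (real \<Rightarrow> real) \<Rightarrow> (real \<Rightarrow> real) \<Rightarrow> bool" where
  "C2_on_unit g g1 g2 \<longleftrightarrow>
     (\<forall>x\<in>{0..1}. (g has_real_derivative g1 x) (at x within {0..1})) \<and>
     (\<forall>x\<in>{0..1}. (g1 has_real_derivative g2 x) (at x within {0..1})) \<and>
     continuous_on {0..1} g2"

definition sup_norm01 :: "(real \<Rightarrow> real) \<Rightarrow> real" where
  "sup_norm01 f = (SUP x\<in>{0..1}. \<bar>f x\<bar>)"

definition I_nm :: "nat \<Rightarrow> nat \<Rightarrow> (real \<Rightarrow> real) \<Rightarrow> real" where
  "I_nm n m g = 1 / (real m * (real n + 1)) *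
     (\<Sum>k=1..m. \<Sum>i=0..n. g ((real k * real n - real n + real i) / (real m * real n)))"

end

theory Submission
  imports Defs
begin

text \<open>Write \<open>Q\<^sub>n f\<close> for \<open>(b - a)/(n + 1) \<Sum>\<^sub>i f(a + i(b - a)/n)\<close>, the integral over
  \<open>[a,b]\<close> of the Bernstein polynomial of \<open>f\<close>. For convex \<open>f\<close> it overestimates the integral:
  \<open>f\<close> lies below its chords, so the integral is at most the composite trapezoid rule, and that rule
  is at most \<open>Q\<^sub>n f\<close> because, again by convexity, the mean of the node values is at most the mean of
  the two endpoint values. If \<open>|g''| \<le> M\<close>, then \<open>\<plusminus>g + M x\<^sup>2/2\<close> is convex, and since
  \<open>Q\<^sub>n(x\<^sup>2) - \<integral>x\<^sup>2 = (b - a)\<^sup>3/(6n)\<close> this yields \<open>|\<integral>g - Q\<^sub>n g| \<le> M (b - a)\<^sup>3/(12n)\<close>.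
  Summing over the \<open>m\<close> subintervals of length \<open>1/m\<close> gives the bound \<open>M/(12 m\<^sup>2 n)\<close>.\<close>

lemma real_mvt_within_Icc:
  fixes f f' :: "real \<Rightarrow> real"
  assumes deriv: "\<And>x. x \<in> {a..b} \<Longrightarrow> (f has_real_derivative f' x) (at x within {a..b})"
    and "a \<le> u" "u \<le> v" "v \<le> b"
  shows "\<exists>\<xi>\<in>{u..v}. f v - f u = f' \<xi> * (v - u)"
proof -
  have "(f has_derivative (\<lambda>h. f' x * h)) (at x within {u..v})" if "u \<le> x" "x \<le> v" for x
    using DERIV_subset[OF deriv[of x], of "{u..v}"] that assms
    by (auto simp: has_field_derivative_def)
  from mvt_very_simple[OF \<open>u \<le> v\<close> this] show ?thesis by simp
qed

lemma mono_on_Icc_if_deriv_nonneg: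
  fixes f f' :: "real \<Rightarrow> real"
  assumes deriv: "\<And>x. x \<in> {a..b} \<Longrightarrow> (f has_real_derivative f' x) (at x within {a..b})"
    and nonneg: "\<And>x. x \<in> {a..b} \<Longrightarrow> f' x \<ge> 0"
  shows "mono_on {a..b} f"
proof (rule mono_onI)
  fix u v assume uv: "u \<in> {a..b}" "v \<in> {a..b}" "u \<le> v"
  then obtain \<xi> where "\<xi> \<in> {u..v}" "f v - f u = f' \<xi> * (v - u)"
    using real_mvt_within_Icc[OF deriv] by (meson atLeastAtMost_iff)
  moreover have "f' \<xi> \<ge> 0"
    using nonneg \<open>\<xi> \<in> {u..v}\<close> uv by auto
  ultimately show "f u \<le> f v"
    using uv(3) by (smt (verit) mult_nonneg_nonneg)
qed

lemma convex_on_Icc_if_second_deriv_nonneg: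
  fixes f f' f'' :: "real \<Rightarrow> real"
  assumes d1: "\<And>x. x \<in> {a..b} \<Longrightarrow> (f has_real_derivative f' x) (at x within {a..b})"
    and d2: "\<And>x. x \<in> {a..b} \<Longrightarrow> (f' has_real_derivative f'' x) (at x within {a..b})"
    and nonneg: "\<And>x. x \<in> {a..b} \<Longrightarrow> f'' x \<ge> 0"
  shows "convex_on {a..b} f"
proof (rule convex_on_linorderI)
  fix t x y :: real
  assume t: "0 < t" "t < 1" and xy: "x \<in> {a..b}" "y \<in> {a..b}" "x < y"
  define z where "z = (1 - t) * x + t * y"
  have "z - x = t * (y - x)" "y - z = (1 - t) * (y - x)"
    unfolding z_def by algebra+
  then have xz: "x \<le> z" and zy: "z \<le> y"
    using t xy(3) by (smt (verit) mult_pos_pos)+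
  obtain \<xi> where \<xi>: "\<xi> \<in> {x..z}" "f z - f x = f' \<xi> * (z - x)"
    using real_mvt_within_Icc[OF d1, of x z] xy xz zy by auto
  obtain \<eta> where \<eta>: "\<eta> \<in> {z..y}" "f y - f z = f' \<eta> * (y - z)"
    using real_mvt_within_Icc[OF d1, of z y] xy xz zy by auto
  have "f' \<xi> \<le> f' \<eta>"
    using mono_onD[OF mono_on_Icc_if_deriv_nonneg[OF d2 nonneg]] \<xi>(1) \<eta>(1) xy by auto
  then have "(1 - t) * (f z - f x) \<le> t * (f y - f z)"
    unfolding \<xi>(2) \<eta>(2) \<open>z - x = _\<close> \<open>y - z = _\<close>
    using t xy(3) by (simp add: mult.left_commute mult_left_mono mult.assoc)
  then show "f ((1 - t) *\<^sub>R x + t *\<^sub>R y) \<le> (1 - t) * f x + t * f y"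
    by (simp add: z_def algebra_simps)
qed simp

lemma convex_integral_le_trapezoid:
  fixes f :: "real \<Rightarrow> real"
  assumes "c \<le> d" and convex: "convex_on {c..d} f" and cont: "continuous_on {c..d} f"
  shows "integral {c..d} f \<le> (d - c) * (f c + f d) / 2"
proof (cases "c = d")
  case False
  with assms have "c < d" by simp
  define s where "s = (f d - f c) / (d - c)"
  define L where "L x = s * (x - c) + f c" for x
  have "((\<lambda>x. s * (x - c)\<^sup>2 / 2 + f c * x) has_vector_derivative L x) (at x within {c..d})" for x
    unfolding L_def has_real_derivative_iff_has_vector_derivative[symmetric]
    by (auto intro!: derivative_eq_intros simp: power2_eq_square field_simps)
  from fundamental_theorem_of_calculus[OF \<open>c \<le> d\<close> this]
  have "(L has_integral (s * (d - c)\<^sup>2 / 2 + f c * d - f c * c)) {c..d}"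
    by simp
  moreover have "s * (d - c)\<^sup>2 / 2 + f c * d - f c * c = (d - c) * (f c + f d) / 2"
    using \<open>c < d\<close> unfolding s_def by (simp add: power2_eq_square field_simps)
  ultimately have L: "(L has_integral (d - c) * (f c + f d) / 2) {c..d}"
    by simp
  have "integral {c..d} f \<le> integral {c..d} L"
  proof (rule integral_le)
    show "f integrable_on {c..d}"
      using cont by (rule integrable_continuous_real)
    show "L integrable_on {c..d}"
      using L by blast
    show "f x \<le> L x" if "x \<in> {c..d}" for x
      using convex_onD_Icc'[OF convex that] unfolding L_def s_def by simp
  qed
  with L show ?thesis
    by (simp add: integral_unique)
qed simp

lemma integral_uniform_partition:
  fixes f :: "real \<Rightarrow> real"
  assumes "h \<ge> 0" and "continuous_on {a..a + real N * h} f"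
  shows "integral {a..a + real N * h} f
         = (\<Sum>j<N. integral {a + real j * h..a + real (Suc j) * h} f)"
  using assms(2)
proof (induction N)
  case (Suc N)
  have le: "real N * h \<le> real (Suc N) * h"
    using \<open>h \<ge> 0\<close> by (intro mult_right_mono) auto
  have "continuous_on {a..a + real N * h} f"
    using Suc.prems by (rule continuous_on_subset) (use le in auto)
  moreover have "integral {a..a + real N * h} f + integral {a + real N * h..a + real (Suc N) * h} f
      = integral {a..a + real (Suc N) * h} f"
    using Suc.prems le \<open>h \<ge> 0\<close>
    by (intro Henstock_Kurzweil_Integration.integral_combine) (auto intro: integrable_continuous_real)
  ultimately show ?case
    using Suc.IH by simp
qed simp

text \<open>Each Bernstein basis polynomial on \<open>[a,b]\<close> has integral \<open>(b - a)/(n + 1)\<close>, so this is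
  \<open>\<integral>\<^sub>a\<^sup>b B\<^sub>n\<^sup>[\<^sup>a\<^sup>,\<^sup>b\<^sup>](f;x) dx\<close>; \<open>I_nm n m\<close> is its sum over the intervals \<open>[(k-1)/m, k/m]\<close>.\<close>
definition bernstein_quadrature :: "nat \<Rightarrow> real \<Rightarrow> real \<Rightarrow> (real \<Rightarrow> real) \<Rightarrow> real" where
  "bernstein_quadrature n a b f =
     (b - a) / (real n + 1) * (\<Sum>i=0..n. f (a + real i * (b - a) / real n))"

lemma convex_integral_le_composite_trapezoid:
  fixes f :: "real \<Rightarrow> real"
  assumes "a \<le> b" "n \<ge> 1" and convex: "convex_on {a..b} f" and cont: "continuous_on {a..b} f"
  shows "integral {a..b} f
         \<le> (b - a) / real n * ((\<Sum>i=0..n. f (a + real i * (b - a) / real n)) - (f a + f b) / 2)"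
proof -
  define h where "h = (b - a) / real n"
  define x where "x i = a + real i * h" for i
  have "h \<ge> 0" and "x n = b"
    using assms unfolding h_def x_def by auto
  have nodes: "a + real i * (b - a) / real n = x i" for i
    unfolding x_def h_def by simp
  have "integral {a..b} f = (\<Sum>j<n. integral {x j..x (Suc j)} f)"
    using integral_uniform_partition[OF \<open>h \<ge> 0\<close>, of a n f] cont \<open>x n = b\<close>
    unfolding x_def by simp
  also have "\<dots> \<le> (\<Sum>j<n. h / 2 * (f (x j) + f (x (Suc j))))"
  proof (rule sum_mono)
    fix j assume "j \<in> {..<n}"
    then have "real (Suc j) * h \<le> real n * h"
      using \<open>h \<ge> 0\<close> by (intro mult_right_mono) auto
    then have sub: "{x j..x (Suc j)} \<subseteq> {a..b}"
      using \<open>h \<ge> 0\<close> \<open>x n = b\<close> unfolding x_def by auto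
    have "x j \<le> x (Suc j)" "x (Suc j) - x j = h"
      using \<open>h \<ge> 0\<close> unfolding x_def by (auto simp: algebra_simps)
    with convex_integral_le_trapezoid[OF _ convex_on_subset[OF convex sub]
        continuous_on_subset[OF cont sub]]
    show "integral {x j..x (Suc j)} f \<le> h / 2 * (f (x j) + f (x (Suc j)))"
      by simp
  qed
  also have "\<dots> = h / 2 * (\<Sum>j<n. f (x j) + f (x (Suc j)))"
    by (simp add: sum_distrib_left)
  also have "(\<Sum>j<k. F j + F (Suc j)) = 2 * (\<Sum>i=0..k. F i) - F 0 - F k"
    for F :: "nat \<Rightarrow> real" and k
    by (induction k) (simp_all add: algebra_simps)
  also have "h / 2 * (2 * (\<Sum>i=0..n. f (x i)) - f (x 0) - f (x n))
      = h * ((\<Sum>i=0..n. f (x i)) - (f a + f b) / 2)"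
    using \<open>x n = b\<close> by (simp add: x_def algebra_simps)
  finally show ?thesis
    unfolding nodes h_def .
qed

lemma convex_sum_nodes_le:
  fixes f :: "real \<Rightarrow> real"
  assumes "a \<le> b" "n \<ge> 1" and convex: "convex_on {a..b} f"
  shows "(\<Sum>i=0..n. f (a + real i * (b - a) / real n)) \<le> (real n + 1) / 2 * (f a + f b)"
proof -
  have "f (a + real i * (b - a) / real n) \<le> f a + (f b - f a) / real n * real i"
    if "i \<le> n" for i
  proof -
    have "real i / real n * (b - a) \<le> 1 * (b - a)"
      using assms that by (intro mult_right_mono) auto
    then have mem: "a + real i * (b - a) / real n \<in> {a..b}"
      using assms by auto
    show ?thesis
    proof (cases "a = b")
      case False
      have "(f b - f a) / (b - a) * (real i * (b - a) / real n) = (f b - f a) / real n * real i"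
        using False by (simp add: divide_simps)
      with convex_onD_Icc'[OF convex mem] False show ?thesis
        by (simp add: add.commute)
    qed simp
  qed
  then have "(\<Sum>i=0..n. f (a + real i * (b - a) / real n))
      \<le> (\<Sum>i=0..n. f a + (f b - f a) / real n * real i)"
    by (intro sum_mono) simp
  also have "\<dots> = (real n + 1) * f a + (f b - f a) / real n * (\<Sum>i=0..n. real i)"
    by (simp add: sum.distrib sum_distrib_left)
  also have "\<dots> = (real n + 1) / 2 * (f a + f b)"
    using double_gauss_sum[of n, where ?'a = real] assms by (simp add: field_simps)
  finally show ?thesis .
qed

lemma convex_integral_le_bernstein_quadrature:
  fixes f :: "real \<Rightarrow> real"
  assumes "a \<le> b" "n \<ge> 1" and convex: "convex_on {a..b} f" and cont: "continuous_on {a..b} f"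
  shows "integral {a..b} f \<le> bernstein_quadrature n a b f"
proof -
  define S where "S = (\<Sum>i=0..n. f (a + real i * (b - a) / real n))"
  have "S / (real n + 1) \<le> (f a + f b) / 2"
    using convex_sum_nodes_le[OF assms(1-3)] unfolding S_def by (simp add: field_simps)
  then have "(b - a) / real n * (S - (f a + f b) / 2) \<le> (b - a) / real n * (S - S / (real n + 1))"
    using assms by (intro mult_left_mono) auto
  also have "S - S / (real n + 1) = real n / (real n + 1) * S"
    by (simp add: field_simps)
  also have "(b - a) / real n * (real n / (real n + 1) * S) = (b - a) / (real n + 1) * S"
    using assms by simp
  finally show ?thesis
    using convex_integral_le_composite_trapezoid[OF assms]
    unfolding bernstein_quadrature_def S_def by linarith
qed

lemma sum_squares_real: "(\<Sum>i=0..n. (real i)\<^sup>2) = real n * (real n + 1) * (2 * real n + 1) / 6"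
  by (induction n) (simp_all add: field_simps power2_eq_square)

lemma bernstein_quadrature_add_scaled:
  "bernstein_quadrature n a b (\<lambda>x. f x + c * g x)
   = bernstein_quadrature n a b f + c * bernstein_quadrature n a b g"
  by (simp add: bernstein_quadrature_def sum.distrib sum_distrib_left algebra_simps)

lemma bernstein_quadrature_square:
  assumes "n \<ge> 1"
  shows "bernstein_quadrature n a b (\<lambda>x. x\<^sup>2) = (b ^ 3 - a ^ 3) / 3 + (b - a) ^ 3 / (6 * real n)"
proof -
  define h where "h = (b - a) / real n"
  have b: "b = a + real n * h"
    unfolding h_def using assms by simp
  have "(\<Sum>i=0..n. (a + real i * (b - a) / real n)\<^sup>2)
      = (\<Sum>i=0..n. a\<^sup>2 + 2 * a * h * real i + h\<^sup>2 * (real i)\<^sup>2)"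
    by (rule sum.cong) (simp_all add: h_def power2_eq_square algebra_simps)
  also have "\<dots> = (real n + 1) * a\<^sup>2 + 2 * a * h * (\<Sum>i=0..n. real i)
      + h\<^sup>2 * (\<Sum>i=0..n. (real i)\<^sup>2)"
    by (simp add: sum.distrib sum_distrib_left)
  also have "(\<Sum>i=0..n. real i) = real n * (real n + 1) / 2"
    using double_gauss_sum[of n, where ?'a = real] by simp
  finally have "bernstein_quadrature n a b (\<lambda>x. x\<^sup>2) = (b - a) / (real n + 1) *
      ((real n + 1) * a\<^sup>2 + 2 * a * h * (real n * (real n + 1) / 2)
       + h\<^sup>2 * (real n * (real n + 1) * (2 * real n + 1) / 6))"
    unfolding bernstein_quadrature_def sum_squares_real by simp
  also have "\<dots> = (b ^ 3 - a ^ 3) / 3 + (b - a) ^ 3 / (6 * real n)"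
    unfolding b using assms by (simp add: field_simps power2_eq_square power3_eq_cube)
  finally show ?thesis .
qed

lemma integral_minus_bernstein_quadrature_le:
  fixes f f' f'' :: "real \<Rightarrow> real"
  assumes d1: "\<And>x. x \<in> {a..b} \<Longrightarrow> (f has_real_derivative f' x) (at x within {a..b})"
    and d2: "\<And>x. x \<in> {a..b} \<Longrightarrow> (f' has_real_derivative f'' x) (at x within {a..b})"
    and lower: "\<And>x. x \<in> {a..b} \<Longrightarrow> f'' x \<ge> - M"
    and "a \<le> b" "n \<ge> 1"
  shows "integral {a..b} f - bernstein_quadrature n a b f \<le> M * (b - a) ^ 3 / (12 * real n)"
proof -
  define p where "p x = f x + M / 2 * x\<^sup>2" for x
  have cont: "continuous_on {a..b} f"
    using d1 by (rule DERIV_continuous_on)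
  have "convex_on {a..b} p"
  proof (rule convex_on_Icc_if_second_deriv_nonneg)
    show "(p has_real_derivative f' x + M * x) (at x within {a..b})" if "x \<in> {a..b}" for x
      unfolding p_def by (auto intro!: derivative_eq_intros d1 that simp: power2_eq_square)
    show "((\<lambda>x. f' x + M * x) has_real_derivative f'' x + M) (at x within {a..b})"
      if "x \<in> {a..b}" for x
      by (auto intro!: derivative_eq_intros d2 that)
    show "f'' x + M \<ge> 0" if "x \<in> {a..b}" for x
      using lower[OF that] by simp
  qed
  moreover have "continuous_on {a..b} p"
    unfolding p_def by (intro continuous_intros cont)
  ultimately have "integral {a..b} p \<le> bernstein_quadrature n a b p"
    using \<open>a \<le> b\<close> \<open>n \<ge> 1\<close> by (intro convex_integral_le_bernstein_quadrature)
  moreover have "integral {a..b} p = integral {a..b} f + M / 2 * ((b ^ 3 - a ^ 3) / 3)"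
  proof -
    have "((\<lambda>x. x ^ 3 / 3) has_vector_derivative x\<^sup>2) (at x within {a..b})" for x
      unfolding has_real_derivative_iff_has_vector_derivative[symmetric]
      by (auto intro!: derivative_eq_intros simp: power2_eq_square)
    from fundamental_theorem_of_calculus[OF \<open>a \<le> b\<close> this]
    have "((\<lambda>x. M / 2 * x\<^sup>2) has_integral M / 2 * ((b ^ 3 - a ^ 3) / 3)) {a..b}"
      by (auto dest: has_integral_mult_right[where c = "M / 2"] simp: diff_divide_distrib)
    with integrable_continuous_real[OF cont] show ?thesis
      unfolding p_def by (intro integral_unique has_integral_add) auto
  qed
  moreover have "bernstein_quadrature n a b p = bernstein_quadrature n a b f
      + M / 2 * ((b ^ 3 - a ^ 3) / 3 + (b - a) ^ 3 / (6 * real n))"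
    unfolding p_def bernstein_quadrature_add_scaled bernstein_quadrature_square[OF \<open>n \<ge> 1\<close>] ..
  ultimately show ?thesis
    by (simp add: algebra_simps)
qed

lemma abs_integral_minus_bernstein_quadrature_le:
  fixes f f' f'' :: "real \<Rightarrow> real"
  assumes d1: "\<And>x. x \<in> {a..b} \<Longrightarrow> (f has_real_derivative f' x) (at x within {a..b})"
    and d2: "\<And>x. x \<in> {a..b} \<Longrightarrow> (f' has_real_derivative f'' x) (at x within {a..b})"
    and bound: "\<And>x. x \<in> {a..b} \<Longrightarrow> \<bar>f'' x\<bar> \<le> M"
    and "a \<le> b" "n \<ge> 1"
  shows "\<bar>integral {a..b} f - bernstein_quadrature n a b f\<bar> \<le> M * (b - a) ^ 3 / (12 * real n)"
proof -
  have lower: "- M \<le> f'' x" "- M \<le> - f'' x" if "x \<in> {a..b}" for x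
    using bound[OF that] by auto
  have "integral {a..b} f - bernstein_quadrature n a b f \<le> M * (b - a) ^ 3 / (12 * real n)"
    using d1 d2 lower(1) \<open>a \<le> b\<close> \<open>n \<ge> 1\<close> by (rule integral_minus_bernstein_quadrature_le)
  moreover have "integral {a..b} (\<lambda>x. - f x) - bernstein_quadrature n a b (\<lambda>x. - f x)
      \<le> M * (b - a) ^ 3 / (12 * real n)"
    using DERIV_minus[OF d1] DERIV_minus[OF d2] lower(2) \<open>a \<le> b\<close> \<open>n \<ge> 1\<close>
    by (rule integral_minus_bernstein_quadrature_le)
  moreover have "bernstein_quadrature n a b (\<lambda>x. - f x) = - bernstein_quadrature n a b f"
    by (simp add: bernstein_quadrature_def sum_negf)
  ultimately show ?thesis
    by (simp add: integral_neg abs_le_iff)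
qed

lemma integral_unit_interval_split:
  fixes f :: "real \<Rightarrow> real"
  assumes "continuous_on {0..1} f" "m \<ge> 1"
  shows "integral {0..1} f = (\<Sum>j<m. integral {real j / real m..real (Suc j) / real m} f)"
  using integral_uniform_partition[of "1 / real m" 0 m f] assms by simp

lemma I_nm_eq_sum_bernstein_quadrature:
  assumes "n \<ge> 1"
  shows "I_nm n m g = (\<Sum>j<m. bernstein_quadrature n (real j / real m) (real (Suc j) / real m) g)"
proof -
  have "I_nm n m g = (\<Sum>j<m. 1 / (real m * (real n + 1)) *
      (\<Sum>i=0..n. g ((real (Suc j) * real n - real n + real i) / (real m * real n))))"
    unfolding I_nm_def sum_distrib_left by (simp add: sum.atLeast1_atMost_eq)
  also have "\<dots> = (\<Sum>j<m. bernstein_quadrature n (real j / real m) (real (Suc j) / real m) g)"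
  proof (rule sum.cong[OF refl])
    fix j assume "j \<in> {..<m}"
    then have "m > 0" by simp
    have "(real (Suc j) * real n - real n + real i) / (real m * real n)
        = real j / real m + real i * (real (Suc j) / real m - real j / real m) / real n" for i
      using \<open>m > 0\<close> assms by (simp add: field_simps)
    moreover have "1 / (real m * (real n + 1)) = (real (Suc j) / real m - real j / real m) / (real n + 1)"
      using \<open>m > 0\<close> by (simp add: field_simps)
    ultimately show "1 / (real m * (real n + 1)) *
        (\<Sum>i=0..n. g ((real (Suc j) * real n - real n + real i) / (real m * real n)))
      = bernstein_quadrature n (real j / real m) (real (Suc j) / real m) g"
      unfolding bernstein_quadrature_def by simp
  qed
  finally show ?thesis .
qed

lemma abs_le_sup_norm01:
  assumes "continuous_on {0..1} f" "x \<in> {0..1}"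
  shows "\<bar>f x\<bar> \<le> sup_norm01 f"
proof -
  have "compact ((\<lambda>x. \<bar>f x\<bar>) ` {0..1})"
    using assms(1) by (intro compact_continuous_image continuous_intros) auto
  then have "bdd_above ((\<lambda>x. \<bar>f x\<bar>) ` {0..1})"
    by (intro bounded_imp_bdd_above compact_imp_bounded)
  with assms(2) show ?thesis
    unfolding sup_norm01_def by (rule cSUP_upper)
qed

lemma abs_integral_minus_composite_bernstein_quadrature_le:
  fixes f f' f'' :: "real \<Rightarrow> real"
  assumes d1: "\<And>x. x \<in> {0..1} \<Longrightarrow> (f has_real_derivative f' x) (at x within {0..1})"
    and d2: "\<And>x. x \<in> {0..1} \<Longrightarrow> (f' has_real_derivative f'' x) (at x within {0..1})"
    and bound: "\<And>x. x \<in> {0..1} \<Longrightarrow> \<bar>f'' x\<bar> \<le> M"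
    and "n \<ge> 1" "m \<ge> 1"
  shows "\<bar>integral {0..1} f - (\<Sum>j<m. bernstein_quadrature n (real j / real m) (real (Suc j) / real m) f)\<bar>
         \<le> M / (12 * real m ^ 2 * real n)"
proof -
  define x where "x j = real j / real m" for j
  have local_error: "\<bar>integral {x j..x (Suc j)} f - bernstein_quadrature n (x j) (x (Suc j)) f\<bar>
      \<le> M * (1 / real m) ^ 3 / (12 * real n)" if "j < m" for j
  proof -
    have sub: "{x j..x (Suc j)} \<subseteq> {0..1}" and "x j \<le> x (Suc j)" "x (Suc j) - x j = 1 / real m"
      using that unfolding x_def by (auto simp: field_simps)
    have "\<bar>integral {x j..x (Suc j)} f - bernstein_quadrature n (x j) (x (Suc j)) f\<bar>
        \<le> M * (x (Suc j) - x j) ^ 3 / (12 * real n)"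
      using sub \<open>x j \<le> x (Suc j)\<close>
      by (intro abs_integral_minus_bernstein_quadrature_le[OF DERIV_subset[OF d1] DERIV_subset[OF d2]]
          bound \<open>n \<ge> 1\<close>) auto
    then show ?thesis
      unfolding \<open>x (Suc j) - x j = 1 / real m\<close> .
  qed
  have "integral {0..1} f - (\<Sum>j<m. bernstein_quadrature n (x j) (x (Suc j)) f)
      = (\<Sum>j<m. integral {x j..x (Suc j)} f - bernstein_quadrature n (x j) (x (Suc j)) f)"
    using integral_unit_interval_split[OF DERIV_continuous_on[OF d1] \<open>m \<ge> 1\<close>]
    by (simp add: x_def sum_subtractf)
  then have "\<bar>integral {0..1} f - (\<Sum>j<m. bernstein_quadrature n (x j) (x (Suc j)) f)\<bar>
      \<le> (\<Sum>j<m. \<bar>integral {x j..x (Suc j)} f - bernstein_quadrature n (x j) (x (Suc j)) f\<bar>)"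
    by (simp only: sum_abs)
  also have "\<dots> \<le> (\<Sum>j<m. M * (1 / real m) ^ 3 / (12 * real n))"
    using local_error by (intro sum_mono) simp
  also have "\<dots> = M / (12 * real m ^ 2 * real n)"
    using \<open>m \<ge> 1\<close> by (simp add: field_simps power2_eq_square power3_eq_cube)
  finally show ?thesis
    unfolding x_def .
qed

theorem mainTheorem5:
  fixes n m :: nat and g g1 g2 :: "real \<Rightarrow> real"
  assumes "n \<ge> 1" and "m \<ge> 1"
    and "C2_on_unit g g1 g2"
  shows "\<bar>integral {0..1} g - I_nm n m g\<bar> \<le> 1 / (12 * real m ^ 2 * real n) * sup_norm01 g2"
proof -
  have d1: "\<And>x. x \<in> {0..1} \<Longrightarrow> (g has_real_derivative g1 x) (at x within {0..1})"
    and d2: "\<And>x. x \<in> {0..1} \<Longrightarrow> (g1 has_real_derivative g2 x) (at x within {0..1})"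
    and cont2: "continuous_on {0..1} g2"
    using assms(3) unfolding C2_on_unit_def by blast+
  have "\<And>x. x \<in> {0..1} \<Longrightarrow> \<bar>g2 x\<bar> \<le> sup_norm01 g2"
    using cont2 by (rule abs_le_sup_norm01)
  from abs_integral_minus_composite_bernstein_quadrature_le[OF d1 d2 this assms(1,2)]
  show ?thesis
    by (simp add: I_nm_eq_sum_bernstein_quadrature[OF assms(1)])
qed

end
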